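(* Let $\Gamma$ be a distance-regular graph with classical parameters $(D,b,\alpha,\beta)$ such that $b\ge2$ and $D\ge3$. Assume $\Gamma$ has the PLS$(\gamma)$ property for some $\gamma\ge3$, and that $\Gamma$ contains two distinct Delsarte vertices at distance at most two. Then $\alpha\le b$ and $\alpha$ is a non-negative integer.
   Context: Distance-regular graph with intersection numbers $b_i,c_i$, valency $k=b_0$. For integer $b\ne1$, $[j]=\frac{b^j-1}{b-1}$. Classical parameters $(D,b,\alpha,\beta)$: diameter $D$, $b_i=([D]-[i])(\beta-\alpha[i])$, $c_i=[i](1+\alpha[i-1])$. Partial linear space: points and lines, any two distinct points on at most one common line; point graph: points adjacent iff on a common line. $\Gamma$ has the PLS$(\gamma)$ property if $\Gamma$ is the point graph of a partial linear space $(V(\Gamma),\mathcal L,\in)$ where $\mathcal L$ is the set of maximal cliques of $\Gamma$ with at least $\gamma$ vertices. A Delsarte clique is a clique with $1+\frac{k}{-\theta_{\min}}$ vertices, $\theta_{\min}$ the smallest adjacency eigenvalue. A Delsarte vertex is a vertex all of whose lines in $\mathcal L$ are Delsarte cliques. *)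

theory Defs
  imports Complex_Main
begin

fun walk :: "('a \<Rightarrow> 'a \<Rightarrow> bool) \<Rightarrow> 'a list \<Rightarrow> bool" where
  "walk E [] = False"
| "walk E [x] = True"
| "walk E (x # y # xs) = (E x y \<and> walk E (y # xs))"

definition simple_graph :: "'a set \<Rightarrow> ('a \<Rightarrow> 'a \<Rightarrow> bool) \<Rightarrow> bool" where
  "simple_graph V E \<longleftrightarrow> finite V \<and> V \<noteq> {} \<and>
     (\<forall>x y. E x y \<longrightarrow> x \<in> V \<and> y \<in> V) \<and>
     (\<forall>x y. E x y \<longrightarrow> E y x) \<and> (\<forall>x. \<not> E x x)"

definition connected_graph :: "'a set \<Rightarrow> ('a \<Rightarrow> 'a \<Rightarrow> bool) \<Rightarrow> bool" where
  "connected_graph V E \<longleftrightarrow>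
     (\<forall>x\<in>V. \<forall>y\<in>V. \<exists>p. walk E p \<and> hd p = x \<and> last p = y)"

definition gdist :: "('a \<Rightarrow> 'a \<Rightarrow> bool) \<Rightarrow> 'a \<Rightarrow> 'a \<Rightarrow> nat" where
  "gdist E x y = (LEAST n. \<exists>p. walk E p \<and> hd p = x \<and> last p = y \<and> length p = Suc n)"

definition distance_regular ::
  "'a set \<Rightarrow> ('a \<Rightarrow> 'a \<Rightarrow> bool) \<Rightarrow> nat \<Rightarrow> (nat \<Rightarrow> nat) \<Rightarrow> (nat \<Rightarrow> nat) \<Rightarrow> bool" where
  "distance_regular V E D bi ci \<longleftrightarrow>
     simple_graph V E \<and> connected_graph V E \<and>
     (\<forall>x\<in>V. \<forall>y\<in>V. gdist E x y \<le> D) \<and>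
     (\<exists>x\<in>V. \<exists>y\<in>V. gdist E x y = D) \<and>
     (\<forall>x\<in>V. \<forall>y\<in>V. gdist E x y < D \<longrightarrow>
        card {z\<in>V. E y z \<and> gdist E x z = gdist E x y + 1} = bi (gdist E x y)) \<and>
     (\<forall>x\<in>V. \<forall>y\<in>V. 1 \<le> gdist E x y \<longrightarrow>
        card {z\<in>V. E y z \<and> gdist E x z + 1 = gdist E x y} = ci (gdist E x y))"

(* Gaussian integer [j] = (b^j - 1)/(b - 1) *)
definition qint :: "int \<Rightarrow> nat \<Rightarrow> real" where
  "qint b j = (real_of_int b ^ j - 1) / (real_of_int b - 1)"

definition classical_parameters ::
  "(nat \<Rightarrow> nat) \<Rightarrow> (nat \<Rightarrow> nat) \<Rightarrow> nat \<Rightarrow> int \<Rightarrow> real \<Rightarrow> real \<Rightarrow> bool" where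
  "classical_parameters bi ci D b \<alpha> \<beta> \<longleftrightarrow> b \<noteq> 1 \<and>
     (\<forall>i<D. real (bi i) = (qint b D - qint b i) * (\<beta> - \<alpha> * qint b i)) \<and>
     (\<forall>i. 1 \<le> i \<and> i \<le> D \<longrightarrow> real (ci i) = qint b i * (1 + \<alpha> * qint b (i - 1)))"

definition is_clique :: "'a set \<Rightarrow> ('a \<Rightarrow> 'a \<Rightarrow> bool) \<Rightarrow> 'a set \<Rightarrow> bool" where
  "is_clique V E C \<longleftrightarrow> C \<subseteq> V \<and> (\<forall>x\<in>C. \<forall>y\<in>C. x \<noteq> y \<longrightarrow> E x y)"

definition maximal_clique :: "'a set \<Rightarrow> ('a \<Rightarrow> 'a \<Rightarrow> bool) \<Rightarrow> 'a set \<Rightarrow> bool" where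
  "maximal_clique V E C \<longleftrightarrow> is_clique V E C \<and> (\<forall>C'. is_clique V E C' \<and> C \<subseteq> C' \<longrightarrow> C' = C)"

definition lines :: "'a set \<Rightarrow> ('a \<Rightarrow> 'a \<Rightarrow> bool) \<Rightarrow> nat \<Rightarrow> 'a set set" where
  "lines V E \<gamma> = {C. maximal_clique V E C \<and> card C \<ge> \<gamma>}"

definition partial_linear_space :: "'a set \<Rightarrow> 'a set set \<Rightarrow> bool" where
  "partial_linear_space P L \<longleftrightarrow> (\<forall>C\<in>L. C \<subseteq> P) \<and>
     (\<forall>x\<in>P. \<forall>y\<in>P. x \<noteq> y \<longrightarrow>
        (\<forall>C1\<in>L. \<forall>C2\<in>L. x \<in> C1 \<and> y \<in> C1 \<and> x \<in> C2 \<and> y \<in> C2 \<longrightarrow> C1 = C2))"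

definition is_point_graph :: "'a set \<Rightarrow> ('a \<Rightarrow> 'a \<Rightarrow> bool) \<Rightarrow> 'a set set \<Rightarrow> bool" where
  "is_point_graph V E L \<longleftrightarrow>
     (\<forall>x\<in>V. \<forall>y\<in>V. x \<noteq> y \<longrightarrow> (E x y \<longleftrightarrow> (\<exists>C\<in>L. x \<in> C \<and> y \<in> C)))"

definition PLS :: "'a set \<Rightarrow> ('a \<Rightarrow> 'a \<Rightarrow> bool) \<Rightarrow> nat \<Rightarrow> bool" where
  "PLS V E \<gamma> \<longleftrightarrow> partial_linear_space V (lines V E \<gamma>) \<and> is_point_graph V E (lines V E \<gamma>)"

(* eigenvalues of the adjacency matrix, vectors indexed by V *)
definition adj_eigenvalue :: "'a set \<Rightarrow> ('a \<Rightarrow> 'a \<Rightarrow> bool) \<Rightarrow> real \<Rightarrow> bool" where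
  "adj_eigenvalue V E \<theta> \<longleftrightarrow> (\<exists>f :: 'a \<Rightarrow> real. (\<exists>v\<in>V. f v \<noteq> 0) \<and>
     (\<forall>v\<in>V. (\<Sum>w\<in>{w\<in>V. E v w}. f w) = \<theta> * f v))"

definition theta_min :: "'a set \<Rightarrow> ('a \<Rightarrow> 'a \<Rightarrow> bool) \<Rightarrow> real" where
  "theta_min V E = Min {\<theta>. adj_eigenvalue V E \<theta>}"

definition delsarte_clique ::
  "'a set \<Rightarrow> ('a \<Rightarrow> 'a \<Rightarrow> bool) \<Rightarrow> nat \<Rightarrow> 'a set \<Rightarrow> bool" where
  "delsarte_clique V E k C \<longleftrightarrow> is_clique V E C \<and>
     real (card C) = 1 + real k / (- theta_min V E)"

definition delsarte_vertex ::
  "'a set \<Rightarrow> ('a \<Rightarrow> 'a \<Rightarrow> bool) \<Rightarrow> nat \<Rightarrow> nat \<Rightarrow> 'a \<Rightarrow> bool" where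
  "delsarte_vertex V E k \<gamma> x \<longleftrightarrow> x \<in> V \<and>
     (\<forall>C\<in>lines V E \<gamma>. x \<in> C \<longrightarrow> delsarte_clique V E k C)"

end

theory Submission
  imports Defs "HOL-Computational_Algebra.Polynomial"
begin

(*
  For classical parameters with b \<ge> 2 the smallest eigenvalue is -[D]. The standard
  sequence of -[D] gives an eigenfunction; for an eigenvalue below -[D] the ratios of
  consecutive sphere sums of an eigenfunction grow too fast for the last equation of the
  three-term recurrence to hold. Hence every line through a Delsarte vertex has \<beta> + 1 points.

  For a Delsarte clique C, the sum h of the (-[D])-eigenfunctions centred at the points of C
  vanishes on C, hence is orthogonal to itself and vanishes everywhere. Evaluating h at a
  vertex adjacent to C shows that it has exactly 1 + \<alpha> neighbours in C; so \<alpha> is a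
  natural number.

  Given Delsarte vertices x, y at distance at most 2, there is a line M through y avoiding x
  that contains a neighbour of x and a vertex z at distance 2 from x. The lines joining x to
  its 1 + \<alpha> neighbours on M pairwise meet only in x, and each contains 1 + \<alpha> neighbours
  of z, all adjacent to x. Thus (1 + \<alpha>)^2 \<le> c\<^sub>2 = (1 + b)(1 + \<alpha>).
*)

lemma walk_snoc: "p \<noteq> [] \<Longrightarrow> walk E (p @ [z]) \<longleftrightarrow> walk E p \<and> E (last p) z"
  by (induction E p rule: walk.induct) auto

lemma degree_diff_eq_left:
  fixes p r :: "'a::ring poly"
  shows "degree r < degree p \<Longrightarrow> degree (p - r) = degree p"
  by (metis degree_add_eq_left degree_minus diff_conv_add_uminus)

section \<open>Distance-regular graphs\<close>

locale distance_regular_graph =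
  fixes V :: "'a set" and E :: "'a \<Rightarrow> 'a \<Rightarrow> bool" and D :: nat and bi ci :: "nat \<Rightarrow> nat"
  assumes distance_regular: "distance_regular V E D bi ci" and diameter_ge_2: "D \<ge> 2"
begin

abbreviation d :: "'a \<Rightarrow> 'a \<Rightarrow> nat" where "d \<equiv> gdist E"

lemma finite_V: "finite V"
  and adj_sym: "E x y \<Longrightarrow> E y x"
  and adj_irrefl: "\<not> E x x"
  and adj_in_V: "E x y \<Longrightarrow> x \<in> V" "E x y \<Longrightarrow> y \<in> V"
  using distance_regular unfolding distance_regular_def simple_graph_def by blast+

lemma shortest_walk:
  assumes "x \<in> V" "y \<in> V"
  obtains p where "walk E p" "hd p = x" "last p = y" "length p = Suc (d x y)"
proof -
  obtain p where p: "walk E p" "hd p = x" "last p = y"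
    using distance_regular assms unfolding distance_regular_def connected_graph_def by blast
  then have "length p = Suc (length p - 1)" by (cases p) auto
  with p have "\<exists>n p. walk E p \<and> hd p = x \<and> last p = y \<and> length p = Suc n" by blast
  then have "\<exists>p. walk E p \<and> hd p = x \<and> last p = y \<and> length p = Suc (d x y)"
    unfolding gdist_def by (rule LeastI_ex)
  with that show thesis by blast
qed

lemma gdist_le_walk: "walk E p \<Longrightarrow> hd p = x \<Longrightarrow> last p = y \<Longrightarrow> length p = Suc n \<Longrightarrow> d x y \<le> n"
  unfolding gdist_def by (rule Least_le) blast

lemma gdist_le_diameter: "x \<in> V \<Longrightarrow> y \<in> V \<Longrightarrow> d x y \<le> D"
  using distance_regular unfolding distance_regular_def by blast

lemma gdist_refl: "d x x = 0"
  using gdist_le_walk[of "[x]" x x 0] by simp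

lemma gdist_eq_0D:
  assumes "x \<in> V" "y \<in> V" "d x y = 0" shows "x = y"
proof -
  obtain p where "walk E p" "hd p = x" "last p = y" "length p = Suc 0"
    using shortest_walk[OF assms(1,2)] assms(3) by metis
  then show ?thesis by (cases p) auto
qed

lemma gdist_adj: assumes "E x y" shows "d x y = 1"
proof -
  have "d x y \<le> 1" using gdist_le_walk[of "[x, y]" x y 1] assms by simp
  moreover have "d x y \<noteq> 0" using gdist_eq_0D adj_in_V[OF assms] adj_irrefl assms by blast
  ultimately show ?thesis by simp
qed

lemma gdist_eq_1D:
  assumes "x \<in> V" "y \<in> V" "d x y = 1" shows "E x y"
proof -
  obtain p where "walk E p" "hd p = x" "last p = y" "length p = 2"
    using shortest_walk[OF assms(1,2)] assms(3) by (metis one_add_one plus_1_eq_Suc)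
  then show ?thesis by (cases p; cases "tl p") auto
qed

lemma gdist_adj_le:
  assumes "x \<in> V" "E v w" shows "d x w \<le> d x v + 1"
proof -
  obtain p where p: "walk E p" "hd p = x" "last p = v" "length p = Suc (d x v)"
    using shortest_walk[OF assms(1) adj_in_V(1)[OF assms(2)]] .
  then have "p \<noteq> []" by auto
  with p assms(2) have "walk E (p @ [w])" "hd (p @ [w]) = x" by (simp_all add: walk_snoc)
  then show ?thesis using gdist_le_walk[of "p @ [w]" x w "Suc (d x v)"] p by simp
qed

lemma gdist_eq_2I:
  assumes "x \<in> V" "z \<in> V" "x \<noteq> z" "\<not> E x z" "E x y" "E y z"
  shows "d x z = 2"
proof -
  have "d x z \<le> d x y + 1" using gdist_adj_le[OF assms(1,6)] .
  moreover have "d x z \<noteq> 0" using gdist_eq_0D[OF assms(1,2)] assms(3) by blast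
  moreover have "d x z \<noteq> 1" using gdist_eq_1D[OF assms(1,2)] assms(4) by blast
  ultimately show ?thesis using gdist_adj[OF assms(5)] by simp
qed

lemma gdist_SucE:
  assumes "x \<in> V" "y \<in> V" "d x y = Suc n"
  obtains w where "E w y" "d x w = n"
proof -
  obtain p where p: "walk E p" "hd p = x" "last p = y" "length p = Suc (Suc n)"
    using shortest_walk[OF assms(1,2)] assms(3) by metis
  define p' where "p' = butlast p"
  have "length p' = Suc n" using p(4) unfolding p'_def by simp
  then have "p' \<noteq> []" by auto
  moreover have "p = p' @ [y]"
    using p(3) append_butlast_last_id[of p] \<open>p' \<noteq> []\<close> unfolding p'_def by fastforce
  ultimately have "walk E p'" and last: "E (last p') y" and "hd p' = x"
    using p(1,2) by (auto simp: walk_snoc)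
  then have "d x (last p') \<le> n"
    using gdist_le_walk[of p' x "last p'" n] \<open>length p' = Suc n\<close> by simp
  moreover have "d x y \<le> d x (last p') + 1" using gdist_adj_le[OF assms(1) last] .
  ultimately show thesis using assms(3) last that by simp
qed

lemma all_distances_occur: "\<exists>x\<in>V. \<forall>j\<le>D. \<exists>y\<in>V. d x y = j"
proof -
  obtain x y0 where x: "x \<in> V" and y0: "y0 \<in> V" "d x y0 = D"
    using distance_regular unfolding distance_regular_def by blast
  have "\<exists>y\<in>V. d x y = D - m" if "m \<le> D" for m
    using that
  proof (induction m)
    case 0 then show ?case using y0 by auto
  next
    case (Suc m)
    then obtain y where y: "y \<in> V" "d x y = Suc (D - Suc m)" by auto
    then obtain w where "E w y" "d x w = D - Suc m" using gdist_SucE[OF x] by metis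
    then show ?case using adj_in_V by blast
  qed
  then have "\<exists>y\<in>V. d x y = j" if "j \<le> D" for j
    using that by (metis diff_diff_cancel diff_le_self)
  with x show ?thesis by blast
qed

lemma card_farther_nbrs:
  "x \<in> V \<Longrightarrow> y \<in> V \<Longrightarrow> d x y < D \<Longrightarrow> card {z\<in>V. E y z \<and> d x z = d x y + 1} = bi (d x y)"
  using distance_regular unfolding distance_regular_def by blast

lemma card_nearer_nbrs:
  "x \<in> V \<Longrightarrow> y \<in> V \<Longrightarrow> 1 \<le> d x y \<Longrightarrow> card {z\<in>V. E y z \<and> d x z + 1 = d x y} = ci (d x y)"
  using distance_regular unfolding distance_regular_def by blast

definition nbrs :: "'a \<Rightarrow> 'a set" where "nbrs v = {w\<in>V. E v w}"

lemma card_nbrs: assumes "v \<in> V" shows "card (nbrs v) = bi 0"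
proof -
  have "{z\<in>V. E v z \<and> d v z = d v v + 1} = nbrs v"
    unfolding nbrs_def using gdist_adj gdist_refl by auto
  then show ?thesis
    using card_farther_nbrs[OF assms assms] diameter_ge_2 gdist_refl by simp
qed

lemma ci_1: "ci 1 = 1"
proof -
  obtain x where x: "x \<in> V" "\<forall>j\<le>D. \<exists>y\<in>V. d x y = j" using all_distances_occur by blast
  moreover have "1 \<le> D" using diameter_ge_2 by simp
  ultimately obtain y where y: "y \<in> V" "d x y = 1" by blast
  then have "E y x" using gdist_eq_1D[OF x(1) y(1)] adj_sym by blast
  then have "{z\<in>V. E y z \<and> d x z + 1 = d x y} = {x}"
    using x(1) y gdist_eq_0D[OF x(1)] gdist_refl by auto
  then show ?thesis using card_nearer_nbrs[OF x(1) y(1)] y(2) by simp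
qed

lemma ci_pos: assumes "1 \<le> j" "j \<le> D" shows "ci j > 0"
proof -
  obtain x y where x: "x \<in> V" and y: "y \<in> V" "d x y = j"
    using all_distances_occur assms by force
  then have "d x y = Suc (j - 1)" using assms by simp
  then obtain w where w: "E w y" "d x w = j - 1" using gdist_SucE[OF x y(1)] by metis
  then have "w \<in> {z\<in>V. E y z \<and> d x z + 1 = d x y}"
    using adj_in_V(1)[OF w(1)] adj_sym[OF w(1)] y assms by simp
  then have "card {z\<in>V. E y z \<and> d x z + 1 = d x y} > 0" using finite_V card_gt_0_iff by force
  then show ?thesis using card_nearer_nbrs[OF x y(1)] y assms by simp
qed

lemma bi_pos: assumes "j < D" shows "bi j > 0"
proof -
  obtain x y where x: "x \<in> V" and y: "y \<in> V" "d x y = Suc j"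
    using all_distances_occur assms by (meson Suc_leI)
  then obtain w where w: "E w y" "d x w = j" using gdist_SucE by metis
  then have "y \<in> {z\<in>V. E w z \<and> d x z = d x w + 1}" using y by auto
  then have "card {z\<in>V. E w z \<and> d x z = d x w + 1} > 0" using finite_V card_gt_0_iff by force
  then show ?thesis using card_farther_nbrs[OF x adj_in_V(1)[OF w(1)]] w assms by simp
qed

definition k :: real where "k = real (bi 0)"
definition bj :: "nat \<Rightarrow> real" where "bj j = (if j < D then real (bi j) else 0)"
definition cj :: "nat \<Rightarrow> real" where "cj j = (if j = 0 then 0 else real (ci j))"
definition aj :: "nat \<Rightarrow> real" where "aj j = k - bj j - cj j"

lemma bj_nonneg: "bj j \<ge> 0"
  unfolding bj_def by auto

lemma cj_pos: "1 \<le> j \<Longrightarrow> j \<le> D \<Longrightarrow> cj j > 0"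
  using ci_pos unfolding cj_def by auto

lemma cj_1: "cj 1 = 1"
  using ci_1 unfolding cj_def by simp

lemma aj_0: "aj 0 = 0"
  unfolding aj_def k_def bj_def cj_def using diameter_ge_2 by simp

text \<open>\<open>p1 j i\<close> is the intersection number \<open>p\<^sup>j\<^sub>1\<^sub>i\<close>.\<close>

definition p1 :: "nat \<Rightarrow> nat \<Rightarrow> real" where
  "p1 j i = (if i = Suc j then bj j else 0) + (if Suc i = j then cj j else 0)
     + (if i = j then aj j else 0)"

lemma nbrs_dist_cases:
  assumes "x \<in> V" "E v w"
  shows "d x w = Suc (d x v) \<or> d x w = d x v \<or> d x w + 1 = d x v"
  using gdist_adj_le[OF assms] gdist_adj_le[OF assms(1) adj_sym[OF assms(2)]] by linarith

lemma card_farther_nbrs_real: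
  assumes "x \<in> V" "v \<in> V"
  shows "real (card {w\<in>V. E v w \<and> d x w = Suc (d x v)}) = bj (d x v)"
proof (cases "d x v < D")
  case True
  then show ?thesis using card_farther_nbrs[OF assms] unfolding bj_def by simp
next
  case False
  then have empty: "{w\<in>V. E v w \<and> d x w = Suc (d x v)} = {}"
    using gdist_le_diameter[OF assms(1)] by fastforce
  show ?thesis using False unfolding empty bj_def by simp
qed

lemma card_nearer_nbrs_real:
  assumes "x \<in> V" "v \<in> V"
  shows "real (card {w\<in>V. E v w \<and> d x w + 1 = d x v}) = cj (d x v)"
  using card_nearer_nbrs[OF assms] unfolding cj_def by (cases "d x v = 0") auto

lemma card_level_nbrs:
  assumes x: "x \<in> V" and v: "v \<in> V"
  shows "real (card {w\<in>V. E v w \<and> d x w = d x v}) = aj (d x v)"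
proof -
  define Up where "Up = {w\<in>V. E v w \<and> d x w = Suc (d x v)}"
  define Mid where "Mid = {w\<in>V. E v w \<and> d x w = d x v}"
  define Dn where "Dn = {w\<in>V. E v w \<and> d x w + 1 = d x v}"
  have "nbrs v = Up \<union> Mid \<union> Dn"
    unfolding nbrs_def Up_def Mid_def Dn_def using nbrs_dist_cases[OF x] by blast
  moreover have "finite Up" "finite Mid" "finite Dn"
    unfolding Up_def Mid_def Dn_def using finite_V by auto
  ultimately have "card (nbrs v) = card Up + card Mid + card Dn"
    by (simp add: card_Un_disjoint Up_def Mid_def Dn_def disjoint_iff)
  then show ?thesis
    using card_nbrs[OF v] card_farther_nbrs_real[OF x v] card_nearer_nbrs_real[OF x v]
    unfolding aj_def k_def Up_def Mid_def Dn_def by simp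
qed

lemma card_nbrs_at_dist:
  assumes x: "x \<in> V" and v: "v \<in> V"
  shows "real (card {w\<in>V. E v w \<and> d x w = i}) = p1 (d x v) i"
proof -
  consider "i = Suc (d x v)" | "Suc i = d x v" | "i = d x v"
    | "i \<noteq> Suc (d x v)" "Suc i \<noteq> d x v" "i \<noteq> d x v" by blast
  then show ?thesis
  proof cases
    case 1
    then show ?thesis using card_farther_nbrs_real[OF x v] unfolding p1_def by simp
  next
    case 2
    then have "{w\<in>V. E v w \<and> d x w = i} = {w\<in>V. E v w \<and> d x w + 1 = d x v}" by auto
    with 2 show ?thesis using card_nearer_nbrs_real[OF x v] unfolding p1_def by simp
  next
    case 3
    then show ?thesis using card_level_nbrs[OF x v] unfolding p1_def by simp
  next
    case 4
    then have empty: "{w\<in>V. E v w \<and> d x w = i} = {}" by (auto dest!: nbrs_dist_cases[OF x])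
    show ?thesis using 4 unfolding empty p1_def by simp
  qed
qed

section \<open>Eigenfunctions and sphere sums\<close>

definition eigenfun :: "real \<Rightarrow> ('a \<Rightarrow> real) \<Rightarrow> bool" where
  "eigenfun \<theta> g \<longleftrightarrow> (\<forall>v\<in>V. (\<Sum>w\<in>nbrs v. g w) = \<theta> * g v)"

lemma adj_eigenvalue_iff: "adj_eigenvalue V E \<theta> \<longleftrightarrow> (\<exists>g. (\<exists>v\<in>V. g v \<noteq> 0) \<and> eigenfun \<theta> g)"
  unfolding adj_eigenvalue_def eigenfun_def nbrs_def by simp

lemma eigenfun_sum:
  assumes "\<And>c. c \<in> C \<Longrightarrow> eigenfun \<theta> (f c)"
  shows "eigenfun \<theta> (\<lambda>v. \<Sum>c\<in>C. f c v)"
  unfolding eigenfun_def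
proof
  fix v assume "v \<in> V"
  have "(\<Sum>w\<in>nbrs v. \<Sum>c\<in>C. f c w) = (\<Sum>c\<in>C. \<Sum>w\<in>nbrs v. f c w)"
    by (rule sum.swap)
  also have "\<dots> = (\<Sum>c\<in>C. \<theta> * f c v)"
    using assms \<open>v \<in> V\<close> unfolding eigenfun_def by simp
  finally show "(\<Sum>w\<in>nbrs v. \<Sum>c\<in>C. f c w) = \<theta> * (\<Sum>c\<in>C. f c v)"
    by (simp add: sum_distrib_left)
qed

definition sphere :: "'a \<Rightarrow> nat \<Rightarrow> 'a set" where "sphere x i = {v\<in>V. d x v = i}"

definition sphere_sum :: "('a \<Rightarrow> real) \<Rightarrow> 'a \<Rightarrow> nat \<Rightarrow> real" where
  "sphere_sum g x i = (\<Sum>v\<in>sphere x i. g v)"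

lemma sphere_sum_0: assumes "x \<in> V" shows "sphere_sum g x 0 = g x"
proof -
  have "sphere x 0 = {x}" unfolding sphere_def using assms gdist_eq_0D gdist_refl by auto
  then show ?thesis unfolding sphere_sum_def by simp
qed

lemma sum_by_dist:
  fixes F :: "nat \<Rightarrow> real"
  assumes x: "x \<in> V" and A: "A \<subseteq> V"
  shows "(\<Sum>z\<in>A. F (d x z) * g z) = (\<Sum>i\<le>D. F i * (\<Sum>z\<in>{z\<in>A. d x z = i}. g z))"
proof -
  have "finite A" using A finite_V finite_subset by blast
  then have "(\<Sum>z\<in>A. F (d x z) * g z) = (\<Sum>i\<le>D. \<Sum>z\<in>{z\<in>A. d x z = i}. F (d x z) * g z)"
    using gdist_le_diameter x A by (intro sum.group[symmetric]) auto
  also have "\<dots> = (\<Sum>i\<le>D. F i * (\<Sum>z\<in>{z\<in>A. d x z = i}. g z))"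
    by (simp add: sum_distrib_left)
  finally show ?thesis .
qed

lemma sum_row_p1:
  assumes "j \<le> D"
  shows "(\<Sum>i\<le>D. u i * p1 j i) = cj j * u (j - 1) + aj j * u j + bj j * u (Suc j)"
proof -
  have "(\<Sum>i\<le>D. u i * p1 j i) = (\<Sum>i\<le>D. if i = Suc j then bj j * u i else 0)
      + (\<Sum>i\<le>D. if Suc i = j then cj j * u i else 0) + (\<Sum>i\<le>D. if i = j then aj j * u i else 0)"
    unfolding sum.distrib[symmetric] by (rule sum.cong) (auto simp: p1_def algebra_simps)
  also have "(\<Sum>i\<le>D. if i = Suc j then bj j * u i else 0) = bj j * u (Suc j)"
    using assms by (auto simp: bj_def)
  also have "(\<Sum>i\<le>D. if Suc i = j then cj j * u i else 0) = cj j * u (j - 1)"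
    using assms by (cases j) (auto simp: cj_def)
  also have "(\<Sum>i\<le>D. if i = j then aj j * u i else 0) = aj j * u j"
    using assms by simp
  finally show ?thesis by simp
qed

lemma sum_col_p1:
  assumes "i \<le> D"
  shows "(\<Sum>j\<le>D. p1 j i * H j) = (if i = 0 then 0 else bj (i - 1) * H (i - 1)) + aj i * H i
          + (if i < D then cj (Suc i) * H (Suc i) else 0)"
proof -
  have "(\<Sum>j\<le>D. p1 j i * H j) = (\<Sum>j\<le>D. if i = Suc j then bj j * H j else 0)
      + (\<Sum>j\<le>D. if Suc i = j then cj j * H j else 0) + (\<Sum>j\<le>D. if i = j then aj j * H j else 0)"
    unfolding sum.distrib[symmetric] by (rule sum.cong) (auto simp: p1_def algebra_simps)
  also have "(\<Sum>j\<le>D. if i = Suc j then bj j * H j else 0) = (if i = 0 then 0 else bj (i - 1) * H (i - 1))"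
    using assms by (cases i) auto
  also have "(\<Sum>j\<le>D. if Suc i = j then cj j * H j else 0) = (if i < D then cj (Suc i) * H (Suc i) else 0)"
    using assms by simp
  also have "(\<Sum>j\<le>D. if i = j then aj j * H j else 0) = aj i * H i"
    using assms by simp
  finally show ?thesis by simp
qed

lemma eigenfun_of_dist:
  assumes rec: "\<And>j. j \<le> D \<Longrightarrow> cj j * u (j - 1) + aj j * u j + bj j * u (Suc j) = \<theta> * u j"
    and c: "c \<in> V"
  shows "eigenfun \<theta> (\<lambda>v. u (d c v))"
  unfolding eigenfun_def
proof
  fix v assume v: "v \<in> V"
  have "nbrs v \<subseteq> V" by (auto simp: nbrs_def)
  then have "(\<Sum>w\<in>nbrs v. u (d c w)) = (\<Sum>i\<le>D. u i * real (card {w\<in>nbrs v. d c w = i}))"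
    using sum_by_dist[OF c, of "nbrs v" u "\<lambda>_. 1"] by simp
  also have "\<dots> = (\<Sum>i\<le>D. u i * p1 (d c v) i)"
  proof (rule sum.cong)
    fix i
    have "{w\<in>nbrs v. d c w = i} = {w\<in>V. E v w \<and> d c w = i}" by (auto simp: nbrs_def)
    then show "u i * real (card {w\<in>nbrs v. d c w = i}) = u i * p1 (d c v) i"
      using card_nbrs_at_dist[OF c v, of i] by simp
  qed simp
  also have "\<dots> = \<theta> * u (d c v)"
    using sum_row_p1 rec gdist_le_diameter[OF c v] by simp
  finally show "(\<Sum>w\<in>nbrs v. u (d c w)) = \<theta> * u (d c v)" .
qed

lemma sphere_sum_recurrence:
  assumes g: "eigenfun \<theta> g" and x: "x \<in> V" and i: "i \<le> D"
  shows "\<theta> * sphere_sum g x i = (if i = 0 then 0 else bj (i - 1) * sphere_sum g x (i - 1))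
          + aj i * sphere_sum g x i + (if i < D then cj (Suc i) * sphere_sum g x (Suc i) else 0)"
proof -
  have "\<theta> * sphere_sum g x i = (\<Sum>v\<in>sphere x i. \<Sum>w\<in>nbrs v. g w)"
    using g unfolding sphere_sum_def eigenfun_def sphere_def by (simp add: sum_distrib_left)
  also have "\<dots> = (\<Sum>v\<in>sphere x i. \<Sum>w\<in>V. if E v w then g w else 0)"
    by (rule sum.cong[OF refl]) (simp add: nbrs_def sum.inter_filter[OF finite_V])
  also have "\<dots> = (\<Sum>w\<in>V. \<Sum>v\<in>sphere x i. if E v w then g w else 0)"
    by (rule sum.swap)
  also have "\<dots> = (\<Sum>w\<in>V. p1 (d x w) i * g w)"
  proof (rule sum.cong)
    fix w assume w: "w \<in> V"
    have "finite (sphere x i)" using finite_V by (simp add: sphere_def)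
    then have "(\<Sum>v\<in>sphere x i. if E v w then g w else 0) = real (card {v\<in>sphere x i. E v w}) * g w"
      by (simp add: sum.inter_filter[symmetric])
    also have "{v\<in>sphere x i. E v w} = {v\<in>V. E w v \<and> d x v = i}"
      unfolding sphere_def using adj_sym by blast
    finally show "(\<Sum>v\<in>sphere x i. if E v w then g w else 0) = p1 (d x w) i * g w"
      using card_nbrs_at_dist[OF x w, of i] by simp
  qed simp
  also have "\<dots> = (\<Sum>j\<le>D. p1 j i * sphere_sum g x j)"
    using sum_by_dist[OF x, of V] unfolding sphere_sum_def sphere_def by simp
  finally show ?thesis using sum_col_p1[OF i, of "sphere_sum g x"] by simp
qed

text \<open>\<open>poly (sphere_poly i) \<theta>\<close> is the sum over the sphere of radius \<open>i\<close> of an eigenfunction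
  for \<open>\<theta>\<close> with value \<open>1\<close> at the centre.\<close>

fun sphere_poly :: "nat \<Rightarrow> real poly" where
  "sphere_poly 0 = 1"
| "sphere_poly (Suc 0) = [:0, 1:]"
| "sphere_poly (Suc (Suc i)) = smult (1 / cj (Suc (Suc i)))
     ([:- aj (Suc i), 1:] * sphere_poly (Suc i) - smult (bj i) (sphere_poly i))"

lemma sphere_sum_poly:
  assumes g: "eigenfun \<theta> g" and x: "x \<in> V"
  shows "i \<le> D \<Longrightarrow> sphere_sum g x i = g x * poly (sphere_poly i) \<theta>"
proof (induction i rule: sphere_poly.induct)
  case 1
  then show ?case using sphere_sum_0[OF x] by simp
next
  case 2
  then show ?case
    using sphere_sum_recurrence[OF g x, of 0] diameter_ge_2 aj_0 cj_1 sphere_sum_0[OF x]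
    by (simp add: algebra_simps)
next
  case (3 i)
  have "\<theta> * sphere_sum g x (Suc i) = bj i * sphere_sum g x i + aj (Suc i) * sphere_sum g x (Suc i)
          + cj (Suc (Suc i)) * sphere_sum g x (Suc (Suc i))"
    using sphere_sum_recurrence[OF g x, of "Suc i"] 3 by simp
  moreover have "cj (Suc (Suc i)) > 0" using cj_pos 3 by simp
  ultimately have "sphere_sum g x (Suc (Suc i))
      = ((\<theta> - aj (Suc i)) * sphere_sum g x (Suc i) - bj i * sphere_sum g x i) / cj (Suc (Suc i))"
    by (simp add: field_simps)
  then show ?case using 3 by (simp add: field_simps)
qed

lemma degree_sphere_poly: "i \<le> D \<Longrightarrow> degree (sphere_poly i) = i"
proof (induction i rule: sphere_poly.induct)
  case (3 i)
  then have "degree ([:- aj (Suc i), 1:] * sphere_poly (Suc i)) = Suc (Suc i)"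
    by (subst degree_mult_eq) auto
  moreover have "degree (smult (bj i) (sphere_poly i)) < Suc (Suc i)"
    using 3 degree_smult_le[of "bj i" "sphere_poly i"] by simp
  moreover have "cj (Suc (Suc i)) \<noteq> 0" using cj_pos[of "Suc (Suc i)"] 3 by simp
  ultimately show ?case by (simp add: degree_diff_eq_left)
qed simp_all

text \<open>The last equation of the sphere-sum recurrence, as a polynomial in the eigenvalue.\<close>

definition eigenvalue_poly :: "real poly" where
  "eigenvalue_poly = [:- aj D, 1:] * sphere_poly D - smult (bj (D - 1)) (sphere_poly (D - 1))"

lemma degree_eigenvalue_poly: "degree eigenvalue_poly = Suc D"
proof -
  have "degree ([:- aj D, 1:] * sphere_poly D) = Suc D"
    using degree_sphere_poly[of D] diameter_ge_2 by (subst degree_mult_eq) auto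
  moreover have "degree (smult (bj (D - 1)) (sphere_poly (D - 1))) < Suc D"
    using degree_sphere_poly[of "D - 1"] degree_smult_le[of "bj (D - 1)" "sphere_poly (D - 1)"]
    by simp
  ultimately show ?thesis unfolding eigenvalue_poly_def by (simp add: degree_diff_eq_left)
qed

lemma eigenvalue_poly_root:
  assumes g: "eigenfun \<theta> g" and x: "x \<in> V" and gx: "g x \<noteq> 0"
  shows "poly eigenvalue_poly \<theta> = 0"
proof -
  have "\<theta> * sphere_sum g x D = bj (D - 1) * sphere_sum g x (D - 1) + aj D * sphere_sum g x D"
    using sphere_sum_recurrence[OF g x, of D] diameter_ge_2 by simp
  then have "g x * poly eigenvalue_poly \<theta> = 0"
    using sphere_sum_poly[OF g x, of D] sphere_sum_poly[OF g x, of "D - 1"]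
    unfolding eigenvalue_poly_def by (simp add: algebra_simps)
  with gx show ?thesis by simp
qed

lemma finite_eigenvalues: "finite {\<theta>. adj_eigenvalue V E \<theta>}"
proof (rule finite_subset)
  show "{\<theta>. adj_eigenvalue V E \<theta>} \<subseteq> {\<theta>. poly eigenvalue_poly \<theta> = 0}"
    using eigenvalue_poly_root unfolding adj_eigenvalue_iff by blast
  have "eigenvalue_poly \<noteq> 0" using degree_eigenvalue_poly by auto
  then show "finite {\<theta>. poly eigenvalue_poly \<theta> = 0}" by (rule poly_roots_finite)
qed

lemma sum_radial_eigenfun:
  assumes g: "eigenfun \<theta> g" and c: "c \<in> V"
  shows "(\<Sum>z\<in>V. u (d c z) * g z) = g c * (\<Sum>i\<le>D. u i * poly (sphere_poly i) \<theta>)"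
proof -
  have "(\<Sum>z\<in>V. u (d c z) * g z) = (\<Sum>i\<le>D. u i * sphere_sum g c i)"
    using sum_by_dist[OF c, of V] unfolding sphere_sum_def sphere_def by simp
  also have "\<dots> = g c * (\<Sum>i\<le>D. u i * poly (sphere_poly i) \<theta>)"
    using sphere_sum_poly[OF g c] by (simp add: sum_distrib_left algebra_simps)
  finally show ?thesis .
qed

text \<open>By \<open>sum_radial_eigenfun\<close>, the inner product of \<open>h\<close> with itself is a combination of the
  values of \<open>h\<close> on \<open>C\<close>.\<close>

lemma radial_sum_vanishes:
  fixes C :: "'a set" and u :: "nat \<Rightarrow> real"
  defines "h \<equiv> \<lambda>v. \<Sum>c\<in>C. u (d c v)"
  assumes C: "C \<subseteq> V" and h: "eigenfun \<theta> h" and zero_on_C: "\<And>c. c \<in> C \<Longrightarrow> h c = 0"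
    and v: "v \<in> V"
  shows "h v = 0"
proof -
  define P where "P = (\<Sum>i\<le>D. u i * poly (sphere_poly i) \<theta>)"
  have "(\<Sum>v\<in>V. h v * h v) = (\<Sum>c\<in>C. \<Sum>v\<in>V. u (d c v) * h v)"
    unfolding h_def by (simp add: sum_distrib_right sum.swap[of _ V])
  also have "\<dots> = (\<Sum>c\<in>C. h c * P)"
    using sum_radial_eigenfun[OF h] C unfolding P_def by (intro sum.cong) auto
  also have "\<dots> = 0" using zero_on_C by simp
  finally have "\<forall>v\<in>V. h v * h v = 0"
    using finite_V sum_nonneg_eq_0_iff[of V "\<lambda>v. h v * h v"] by simp
  with v show ?thesis by simp
qed

end

section \<open>Classical parameters and the smallest eigenvalue\<close>

locale classical_drg = distance_regular_graph V E D bi ci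
  for V :: "'a set" and E D bi ci +
  fixes b :: int and \<alpha> \<beta> :: real
  assumes classical: "classical_parameters bi ci D b \<alpha> \<beta>" and b_ge_2: "b \<ge> 2"
begin

abbreviation q :: "nat \<Rightarrow> real" where "q \<equiv> qint b"

lemma qint_0: "q 0 = 0" and qint_1: "q 1 = 1" and qint_2: "q 2 = 1 + real_of_int b"
  using b_ge_2 by (auto simp: qint_def field_simps power2_eq_square)

lemma qint_strict_mono: assumes "i < j" shows "q i < q j"
proof -
  have "real_of_int b ^ i < real_of_int b ^ j"
    using b_ge_2 assms by (intro power_strict_increasing) auto
  moreover have "real_of_int b - 1 > 0" using b_ge_2 by simp
  ultimately show ?thesis unfolding qint_def by (simp add: divide_strict_right_mono)
qed

lemma qint_pos: "1 \<le> i \<Longrightarrow> q i > 0"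
  using qint_strict_mono[of 0 i] qint_0 by simp

lemma bi_classical: "i < D \<Longrightarrow> real (bi i) = (q D - q i) * (\<beta> - \<alpha> * q i)"
  using classical unfolding classical_parameters_def by blast

lemma ci_classical: "1 \<le> i \<Longrightarrow> i \<le> D \<Longrightarrow> real (ci i) = q i * (1 + \<alpha> * q (i - 1))"
  using classical unfolding classical_parameters_def by blast

lemma k_classical: "k = q D * \<beta>"
  using bi_classical[of 0] diameter_ge_2 qint_0 unfolding k_def by simp

lemma bj_classical: "i \<le> D \<Longrightarrow> bj i = (q D - q i) * (\<beta> - \<alpha> * q i)"
  using bi_classical unfolding bj_def by auto

lemma cj_classical: "1 \<le> i \<Longrightarrow> i \<le> D \<Longrightarrow> cj i = q i * (1 + \<alpha> * q (i - 1))"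
  using ci_classical unfolding cj_def by auto

lemma beta_minus_alpha_qint_pos:
  assumes "i < D" shows "\<beta> - \<alpha> * q i > 0"
proof -
  have "real (bi i) > 0" using bi_pos assms by simp
  moreover have "q D - q i > 0" using qint_strict_mono assms by simp
  ultimately show ?thesis using bi_classical[OF assms] by (simp add: zero_less_mult_iff)
qed

lemma beta_pos: "\<beta> > 0"
  using beta_minus_alpha_qint_pos[of 0] diameter_ge_2 qint_0 by simp

lemma beta_gt_alpha: "\<beta> > \<alpha>"
  using beta_minus_alpha_qint_pos[of 1] diameter_ge_2 qint_1 by simp

text \<open>The standard sequence of \<open>-[D]\<close>: \<open>std_seq j\<close> is the value at distance \<open>j\<close> from
  the centre of the eigenfunction for \<open>-[D]\<close> with value \<open>1\<close> at the centre.\<close>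

fun std_seq :: "nat \<Rightarrow> real" where
  "std_seq 0 = 1"
| "std_seq (Suc j) = - (1 + \<alpha> * q j) / (\<beta> - \<alpha> * q j) * std_seq j"

lemma std_seq_1: "std_seq 1 = - 1 / \<beta>"
  using qint_0 by simp

lemma std_seq_2: "std_seq 2 = (1 + \<alpha>) / (\<beta> * (\<beta> - \<alpha>))"
  using qint_0 qint_1 beta_pos beta_gt_alpha by (simp add: numeral_2_eq_2 field_simps)

lemma std_seq_recurrence:
  assumes "j \<le> D"
  shows "cj j * std_seq (j - 1) + aj j * std_seq j + bj j * std_seq (Suc j) = - q D * std_seq j"
proof (cases j)
  case 0
  have "bj 0 = q D * \<beta>" using k_classical diameter_ge_2 unfolding k_def bj_def by simp
  then show ?thesis using 0 aj_0 beta_pos qint_0 by (simp add: cj_def)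
next
  case (Suc i)
  define X where "X = \<beta> - \<alpha> * q i"
  define Y where "Y = 1 + \<alpha> * q i"
  have "X > 0" unfolding X_def using beta_minus_alpha_qint_pos Suc assms by simp
  have cj: "cj j = q j * Y" using cj_classical[of j] Suc assms unfolding Y_def by simp
  have bj: "bj j = (q D - q j) * (\<beta> - \<alpha> * q j)" using bj_classical assms by simp
  define R where "R = (1 + \<alpha> * q j) / (\<beta> - \<alpha> * q j)"
  have bj_R: "bj j * R = (q D - q j) * (1 + \<alpha> * q j)"
  proof (cases "j < D")
    case True
    then show ?thesis using beta_minus_alpha_qint_pos[of j] unfolding bj R_def by simp
  next
    case False
    then show ?thesis using assms unfolding bj_def by simp
  qed
  have aj: "q j * X - aj j + (q D - q j) * (1 + \<alpha> * q j) = q D"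
    unfolding aj_def k_classical bj cj X_def Y_def by (simp add: algebra_simps)
  have std_Suc: "std_seq (Suc j) = - R * std_seq j" unfolding R_def by (simp add: minus_divide_left)
  have std_j: "std_seq j = - (Y / X) * std_seq i"
    using \<open>X > 0\<close> unfolding Suc X_def Y_def by (simp add: field_simps)
  have "cj j * std_seq (j - 1) + aj j * std_seq j + bj j * std_seq (Suc j)
      = std_seq i * (Y / X) * (q j * X - aj j + bj j * R)"
    unfolding std_Suc std_j cj using Suc \<open>X > 0\<close> by (simp add: field_simps)
  also have "\<dots> = - q D * std_seq j"
    unfolding bj_R aj std_j by simp
  finally show ?thesis .
qed

lemma eigenfun_std_seq: "c \<in> V \<Longrightarrow> eigenfun (- q D) (\<lambda>v. std_seq (d c v))"
  by (rule eigenfun_of_dist) (use std_seq_recurrence in auto)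

text \<open>\<open>rho i\<close> is the ratio \<open>-G\<^sub>i/G\<^sub>i\<^sub>-\<^sub>1\<close> of consecutive terms of the solution of the
  sphere-sum recurrence for the eigenvalue \<open>-[D]\<close>. Below \<open>-[D]\<close> the ratios strictly exceed
  \<open>rho i\<close>, which is incompatible with the last equation of the recurrence.\<close>

definition rho :: "nat \<Rightarrow> real" where "rho i = (q D - q (i - 1)) / q i"

lemma rho_pos: "1 \<le> i \<Longrightarrow> i \<le> D \<Longrightarrow> rho i > 0"
  unfolding rho_def using qint_pos qint_strict_mono[of "i - 1" D] by simp

lemma rho_Suc:
  assumes "1 \<le> i" "i < D"
  shows "cj (Suc i) * rho (Suc i) = aj i + q D - bj (i - 1) / rho i"
proof -
  have q: "q i > 0" "q D - q (i - 1) > 0"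
    using qint_pos qint_strict_mono[of "i - 1" D] assms by auto
  have bj_eq: "bj (i - 1) = (q D - q (i - 1)) * (\<beta> - \<alpha> * q (i - 1))"
    using bj_classical[of "i - 1"] assms by simp
  have bj: "bj (i - 1) / rho i = q i * (\<beta> - \<alpha> * q (i - 1))"
    unfolding bj_eq rho_def using q by (simp add: field_simps)
  have cj: "cj (Suc i) * rho (Suc i) = (1 + \<alpha> * q i) * (q D - q i)"
    using cj_classical[of "Suc i"] qint_pos[of "Suc i"] assms unfolding rho_def by (simp add: field_simps)
  have aj: "aj i = q D * \<beta> - (q D - q i) * (\<beta> - \<alpha> * q i) - q i * (1 + \<alpha> * q (i - 1))"
    unfolding aj_def k_classical using bj_classical[of i] cj_classical[of i] assms by simp
  show ?thesis unfolding bj cj aj by (simp add: algebra_simps)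
qed

lemma rho_last: "(aj D + q D) * rho D = bj (D - 1)" and aj_D_plus_qint_pos: "aj D + q D > 0"
proof -
  have "q D > 0" using qint_pos diameter_ge_2 by simp
  have aj: "aj D + q D = q D * (\<beta> - \<alpha> * q (D - 1))"
    unfolding aj_def k_classical using cj_classical[of D] diameter_ge_2
    by (simp add: bj_def algebra_simps)
  have bj: "bj (D - 1) = (q D - q (D - 1)) * (\<beta> - \<alpha> * q (D - 1))"
    using bj_classical[of "D - 1"] by simp
  show "(aj D + q D) * rho D = bj (D - 1)"
    unfolding aj rho_def bj using \<open>q D > 0\<close> by (simp add: field_simps)
  show "aj D + q D > 0"
    unfolding aj using \<open>q D > 0\<close> beta_minus_alpha_qint_pos[of "D - 1"] diameter_ge_2 by simp
qed

lemma recurrence_ratio_gt: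
  assumes G_1: "G 1 = \<theta> * G 0" and G_0: "G 0 \<noteq> 0"
    and rec: "\<And>i. 1 \<le> i \<Longrightarrow> i < D \<Longrightarrow>
      \<theta> * G i = bj (i - 1) * G (i - 1) + aj i * G i + cj (Suc i) * G (Suc i)"
    and \<theta>: "\<theta> < - q D" and i: "1 \<le> i" "i \<le> D"
  shows "G (i - 1) \<noteq> 0 \<and> rho i < - G i / G (i - 1)"
  using i(1)
proof (induction i rule: dec_induct)
  case base
  have "rho 1 = q D" unfolding rho_def using qint_0 qint_1 by simp
  then show ?case using G_0 G_1 \<theta> by simp
next
  case (step n)
  define r where "r = - G n / G (n - 1)"
  have r: "rho n < r" "rho n > 0" and G: "G n = - r * G (n - 1)" "G (n - 1) \<noteq> 0"
    using step rho_pos i(2) unfolding r_def by auto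
  have "G n \<noteq> 0" using G r by simp
  have cj_pos': "cj (Suc n) > 0" using cj_pos step i(2) by simp
  have "cj (Suc n) * G (Suc n) = G n * (\<theta> - aj n + bj (n - 1) / r)"
    using rec[of n] step i(2) G r by (simp add: field_simps)
  then have ratio: "- G (Suc n) / G n = (aj n - \<theta> - bj (n - 1) / r) / cj (Suc n)"
    using \<open>G n \<noteq> 0\<close> cj_pos' by (simp add: field_simps)
  have "bj (n - 1) / r \<le> bj (n - 1) / rho n"
    using r bj_nonneg by (intro divide_left_mono) auto
  then have "aj n + q D - bj (n - 1) / rho n < aj n - \<theta> - bj (n - 1) / r" using \<theta> by simp
  then have "(aj n + q D - bj (n - 1) / rho n) / cj (Suc n) < (aj n - \<theta> - bj (n - 1) / r) / cj (Suc n)"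
    using cj_pos' by (simp add: divide_strict_right_mono)
  moreover have "(aj n + q D - bj (n - 1) / rho n) / cj (Suc n) = rho (Suc n)"
    using rho_Suc[of n] step i(2) cj_pos' by (simp add: field_simps)
  ultimately show ?case using ratio \<open>G n \<noteq> 0\<close> by simp
qed

lemma recurrence_no_solution_below:
  assumes G_1: "G 1 = \<theta> * G 0" and G_0: "G 0 \<noteq> 0"
    and rec: "\<And>i. 1 \<le> i \<Longrightarrow> i < D \<Longrightarrow>
      \<theta> * G i = bj (i - 1) * G (i - 1) + aj i * G i + cj (Suc i) * G (Suc i)"
    and last: "\<theta> * G D = bj (D - 1) * G (D - 1) + aj D * G D"
    and \<theta>: "\<theta> < - q D"
  shows False
proof -
  define r where "r = - G D / G (D - 1)"
  have r: "rho D < r" "rho D > 0" and G: "G D = - r * G (D - 1)" "G (D - 1) \<noteq> 0"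
    using recurrence_ratio_gt[OF G_1 G_0 rec \<theta>, of D] rho_pos diameter_ge_2 unfolding r_def
    by auto
  have "(aj D - \<theta>) * r * G (D - 1) = bj (D - 1) * G (D - 1)"
    using last unfolding G by (simp add: algebra_simps)
  then have "(aj D - \<theta>) * r = bj (D - 1)" using G(2) by simp
  moreover have "(aj D + q D) * r < (aj D - \<theta>) * r" using \<theta> r by simp
  moreover have "(aj D + q D) * rho D \<le> (aj D + q D) * r"
    using r aj_D_plus_qint_pos by (intro mult_left_mono) auto
  ultimately show False using rho_last by simp
qed

lemma eigenvalue_ge:
  assumes g: "eigenfun \<theta> g" and x: "x \<in> V" and gx: "g x \<noteq> 0"
  shows "\<theta> \<ge> - q D"
proof (rule ccontr)
  assume "\<not> \<theta> \<ge> - q D"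
  then have \<theta>: "\<theta> < - q D" by simp
  let ?G = "sphere_sum g x"
  show False
  proof (rule recurrence_no_solution_below[of ?G \<theta>])
    show "?G 1 = \<theta> * ?G 0"
      using sphere_sum_recurrence[OF g x, of 0] diameter_ge_2 aj_0 cj_1 by simp
    show "?G 0 \<noteq> 0" using sphere_sum_0[OF x] gx by simp
    show "\<theta> * ?G i = bj (i - 1) * ?G (i - 1) + aj i * ?G i + cj (Suc i) * ?G (Suc i)"
      if "1 \<le> i" "i < D" for i
      using sphere_sum_recurrence[OF g x, of i] that by simp
    show "\<theta> * ?G D = bj (D - 1) * ?G (D - 1) + aj D * ?G D"
      using sphere_sum_recurrence[OF g x, of D] diameter_ge_2 by simp
  qed (rule \<theta>)
qed

theorem theta_min_eq: "theta_min V E = - q D"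
  unfolding theta_min_def
proof (rule Min_eqI[OF finite_eigenvalues])
  fix \<theta> assume "\<theta> \<in> {\<theta>. adj_eigenvalue V E \<theta>}"
  then obtain g v where "eigenfun \<theta> g" "v \<in> V" "g v \<noteq> 0"
    unfolding adj_eigenvalue_iff by blast
  then show "- q D \<le> \<theta>" by (rule eigenvalue_ge)
next
  obtain c where c: "c \<in> V" using all_distances_occur by blast
  have "eigenfun (- q D) (\<lambda>v. std_seq (d c v))" by (rule eigenfun_std_seq[OF c])
  moreover have "std_seq (d c c) \<noteq> 0" using gdist_refl by simp
  ultimately show "- q D \<in> {\<theta>. adj_eigenvalue V E \<theta>}"
    using c unfolding adj_eigenvalue_iff mem_Collect_eq
    by (intro exI[where x = "\<lambda>v. std_seq (d c v)"]) blast
qed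

section \<open>Delsarte cliques\<close>

lemma delsarte_clique_card:
  assumes "delsarte_clique V E (bi 0) C" shows "real (card C) = \<beta> + 1"
proof -
  have "q D > 0" using qint_pos diameter_ge_2 by simp
  then show ?thesis
    using assms k_classical unfolding delsarte_clique_def theta_min_eq k_def by simp
qed

lemma clique_std_sum_vanishes:
  assumes C: "is_clique V E C" "real (card C) = \<beta> + 1" and c: "c \<in> C"
  shows "(\<Sum>c'\<in>C. std_seq (d c' c)) = 0"
proof -
  have fin: "finite C" using C(1) finite_subset[OF _ finite_V] unfolding is_clique_def by blast
  then have "card C \<ge> 1" using c by (auto simp: Suc_le_eq card_gt_0_iff)
  have "(\<Sum>c'\<in>C. std_seq (d c' c)) = std_seq (d c c) + (\<Sum>c'\<in>C - {c}. std_seq (d c' c))"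
    using fin c by (simp add: sum.remove)
  also have "(\<Sum>c'\<in>C - {c}. std_seq (d c' c)) = (\<Sum>c'\<in>C - {c}. - 1 / \<beta>)"
    using C(1) c gdist_adj std_seq_1 unfolding is_clique_def by (intro sum.cong) auto
  also have "\<dots> = (real (card C) - 1) * (- 1 / \<beta>)"
    using c \<open>card C \<ge> 1\<close> by (simp add: card_Diff_singleton of_nat_diff)
  finally show ?thesis using C(2) beta_pos gdist_refl by simp
qed

lemma clique_std_sum_nbr:
  assumes C: "is_clique V E C" and z: "z \<in> V" "z \<notin> C" and c0: "c0 \<in> C" "E z c0"
  shows "(\<Sum>c\<in>C. std_seq (d c z))
    = std_seq 1 * real (card {c\<in>C. E c z}) + std_seq 2 * (real (card C) - real (card {c\<in>C. E c z}))"
proof -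
  define N where "N = {c\<in>C. E c z}"
  have CV: "C \<subseteq> V" using C unfolding is_clique_def by blast
  have fin: "finite C" using finite_subset[OF CV finite_V] .
  have "N \<subseteq> C" unfolding N_def by blast
  have dist_2: "d c z = 2" if "c \<in> C - N" for c
  proof -
    have c: "c \<in> C" "\<not> E c z" "c \<in> V" using that CV unfolding N_def by auto
    then have "c \<noteq> c0" using adj_sym[OF c0(2)] by blast
    then have "E c c0" using C c(1) c0(1) unfolding is_clique_def by blast
    then have "d c z \<le> 2" using gdist_adj_le[OF c(3) adj_sym[OF c0(2)]] gdist_adj by simp
    moreover have "d c z \<noteq> 0" using gdist_eq_0D[OF c(3) z(1)] z(2) c(1) by blast
    moreover have "d c z \<noteq> 1" using gdist_eq_1D[OF c(3) z(1)] c(2) by blast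
    ultimately show ?thesis by simp
  qed
  have "(\<Sum>c\<in>C. std_seq (d c z)) = (\<Sum>c\<in>C - N. std_seq (d c z)) + (\<Sum>c\<in>N. std_seq (d c z))"
    using sum.subset_diff[OF \<open>N \<subseteq> C\<close> fin] .
  also have "\<dots> = (\<Sum>c\<in>C - N. std_seq 2) + (\<Sum>c\<in>N. std_seq 1)"
    using dist_2 gdist_adj unfolding N_def by simp
  also have "\<dots> = std_seq 2 * (real (card C) - real (card N)) + std_seq 1 * real (card N)"
    using \<open>N \<subseteq> C\<close> fin card_mono[OF fin \<open>N \<subseteq> C\<close>]
    by (simp add: card_Diff_subset finite_subset of_nat_diff)
  finally show ?thesis unfolding N_def by simp
qed

lemma delsarte_clique_regular:
  assumes C: "is_clique V E C" "real (card C) = \<beta> + 1"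
    and z: "z \<in> V" "z \<notin> C" and c0: "c0 \<in> C" "E z c0"
  shows "real (card {c\<in>C. E c z}) = 1 + \<alpha>"
proof -
  define A where "A = real (card {c\<in>C. E c z})"
  have CV: "C \<subseteq> V" using C(1) unfolding is_clique_def by blast
  have "eigenfun (- q D) (\<lambda>v. \<Sum>c\<in>C. std_seq (d c v))"
    using CV by (intro eigenfun_sum eigenfun_std_seq) auto
  from radial_sum_vanishes[OF CV this clique_std_sum_vanishes[OF C] z(1)]
  have "std_seq 1 * A + std_seq 2 * (\<beta> + 1 - A) = 0"
    using clique_std_sum_nbr[OF C(1) z c0] C(2) unfolding A_def by simp
  then have "- A / \<beta> + (1 + \<alpha>) / (\<beta> * (\<beta> - \<alpha>)) * (\<beta> + 1 - A) = 0"
    unfolding std_seq_1 std_seq_2 by simp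
  moreover have "\<beta> * (\<beta> - \<alpha>) * (- A / \<beta> + (1 + \<alpha>) / (\<beta> * (\<beta> - \<alpha>)) * (\<beta> + 1 - A))
      = (\<beta> + 1) * (1 + \<alpha> - A)"
    using beta_pos beta_gt_alpha by (simp add: field_simps)
  ultimately have "(\<beta> + 1) * (1 + \<alpha> - A) = 0" by simp
  then show ?thesis using beta_pos unfolding A_def by simp
qed

lemma exists_nbr_outside:
  assumes p: "p \<in> C" and C: "C \<subseteq> V" "real (card C) = \<beta> + 1"
  obtains v where "E p v" "v \<notin> C"
proof -
  have fin: "finite C" using finite_subset[OF C(1) finite_V] .
  have "\<not> nbrs p \<subseteq> C - {p}"
  proof
    assume "nbrs p \<subseteq> C - {p}"
    then have "card (nbrs p) \<le> card (C - {p})" using fin by (intro card_mono) auto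
    moreover have "card C \<ge> 1" using fin p by (auto simp: Suc_le_eq card_gt_0_iff)
    ultimately have "real (card (nbrs p)) \<le> real (card C) - 1"
      using p by (simp add: card_Diff_singleton of_nat_diff)
    moreover have "p \<in> V" using p C(1) by blast
    ultimately have "q D * \<beta> \<le> \<beta>"
      using card_nbrs C(2) k_classical unfolding k_def by simp
    moreover have "1 * \<beta> < q D * \<beta>"
      using qint_strict_mono[of 1 D] qint_1 diameter_ge_2 beta_pos
      by (intro mult_strict_right_mono) auto
    ultimately show False by simp
  qed
  then obtain v where "E p v" "v \<notin> C - {p}" unfolding nbrs_def by blast
  moreover have "v \<noteq> p" using \<open>E p v\<close> adj_irrefl by blast
  ultimately show thesis using that by blast
qed

lemma card_common_nbrs:
  assumes x: "x \<in> V" and z: "z \<in> V" "d x z = 2"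
  shows "real (card {v\<in>V. E z v \<and> E x v}) = (1 + real_of_int b) * (1 + \<alpha>)"
proof -
  have "{v\<in>V. E z v \<and> d x v + 1 = d x z} = {v\<in>V. E z v \<and> E x v}"
    using z(2) by (auto dest: gdist_adj intro: gdist_eq_1D[OF x])
  then show ?thesis
    using card_nearer_nbrs[OF x z(1)] ci_classical[of 2] z(2) diameter_ge_2 qint_1 qint_2
    by simp
qed

end

section \<open>Lines through Delsarte vertices\<close>

locale classical_pls = classical_drg V E D bi ci b \<alpha> \<beta>
  for V :: "'a set" and E D bi ci b \<alpha> \<beta> +
  fixes \<gamma> :: nat
  assumes PLS: "PLS V E \<gamma>"
begin

abbreviation L :: "'a set set" where "L \<equiv> lines V E \<gamma>"

lemma line_through:
  assumes "E u v" obtains C where "C \<in> L" "u \<in> C" "v \<in> C"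
proof -
  have "u \<noteq> v" using assms adj_irrefl by blast
  then have "\<exists>C\<in>L. u \<in> C \<and> v \<in> C"
    using PLS adj_in_V[OF assms] assms unfolding PLS_def is_point_graph_def by blast
  with that show thesis by blast
qed

lemma line_is_clique: "C \<in> L \<Longrightarrow> is_clique V E C"
  unfolding lines_def maximal_clique_def by blast

lemma line_subset: "C \<in> L \<Longrightarrow> C \<subseteq> V"
  using line_is_clique unfolding is_clique_def by blast

lemma line_adj: "C \<in> L \<Longrightarrow> c \<in> C \<Longrightarrow> c' \<in> C \<Longrightarrow> c \<noteq> c' \<Longrightarrow> E c c'"
  using line_is_clique unfolding is_clique_def by blast

lemma line_unique:
  "C1 \<in> L \<Longrightarrow> C2 \<in> L \<Longrightarrow> u \<in> C1 \<Longrightarrow> v \<in> C1 \<Longrightarrow> u \<in> C2 \<Longrightarrow> v \<in> C2 \<Longrightarrow> u \<noteq> v \<Longrightarrow> C1 = C2"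
  using PLS line_subset unfolding PLS_def partial_linear_space_def by blast

lemma lines_meet_in_point:
  assumes "C1 \<in> L" "C2 \<in> L" "C1 \<noteq> C2" "x \<in> C1" "x \<in> C2"
  shows "C1 \<inter> C2 = {x}"
proof
  show "C1 \<inter> C2 \<subseteq> {x}"
  proof
    fix y assume "y \<in> C1 \<inter> C2"
    then show "y \<in> {x}" using line_unique[OF assms(1,2,4) _ assms(5)] assms(3) by blast
  qed
qed (use assms in blast)

lemma delsarte_line_card:
  "delsarte_vertex V E (bi 0) \<gamma> p \<Longrightarrow> C \<in> L \<Longrightarrow> p \<in> C \<Longrightarrow> real (card C) = \<beta> + 1"
  using delsarte_clique_card unfolding delsarte_vertex_def by blast

lemma delsarte_line_regular:
  assumes "delsarte_vertex V E (bi 0) \<gamma> p" "C \<in> L" "p \<in> C"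
    and "z \<in> V" "z \<notin> C" "c0 \<in> C" "E z c0"
  shows "real (card {c\<in>C. E c z}) = 1 + \<alpha>"
  using delsarte_clique_regular[OF line_is_clique delsarte_line_card] assms by blast

lemma alpha_nat:
  assumes x: "delsarte_vertex V E (bi 0) \<gamma> x" shows "\<exists>n::nat. \<alpha> = real n"
proof -
  have xV: "x \<in> V" using x unfolding delsarte_vertex_def by blast
  have "card (nbrs x) > 0" using card_nbrs[OF xV] bi_pos diameter_ge_2 by simp
  then obtain z0 where "z0 \<in> nbrs x" by (auto simp: card_gt_0_iff)
  then obtain C where C: "C \<in> L" "x \<in> C" using line_through unfolding nbrs_def by blast
  obtain z where z: "E x z" "z \<notin> C"
    using exists_nbr_outside[OF C(2) line_subset[OF C(1)] delsarte_line_card[OF x C]] .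
  define N where "N = {c\<in>C. E c z}"
  have card_N: "real (card N) = 1 + \<alpha>"
    unfolding N_def
    using delsarte_line_regular[OF x C adj_in_V(2)[OF z(1)] z(2) C(2) adj_sym[OF z(1)]] .
  have "N \<subseteq> V" using line_subset[OF C(1)] unfolding N_def by blast
  then have "finite N" using finite_subset finite_V by blast
  moreover have "x \<in> N" using C(2) z(1) unfolding N_def by blast
  ultimately have "card N \<ge> 1" by (auto simp: Suc_le_eq card_gt_0_iff)
  then have "\<alpha> = real (card N - 1)" using card_N by (simp add: of_nat_diff)
  then show ?thesis by blast
qed

lemma line_avoiding_vertex:
  assumes y: "delsarte_vertex V E (bi 0) \<gamma> y" and x: "x \<in> V" "x \<noteq> y" "d x y \<le> 2"
  obtains M y0 z where "M \<in> L" "y \<in> M" "x \<notin> M" "y0 \<in> M" "E x y0" "z \<in> M" "\<not> E x z"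
proof -
  have yV: "y \<in> V" using y unfolding delsarte_vertex_def by blast
  have "d x y \<noteq> 0" using gdist_eq_0D[OF x(1) yV] x(2) by blast
  then consider "d x y = 1" | "d x y = 2" using x(3) by linarith
  then show thesis
  proof cases
    case 1
    then have xy: "E x y" using gdist_eq_1D[OF x(1) yV] by blast
    obtain L0 where L0: "L0 \<in> L" "x \<in> L0" "y \<in> L0" using line_through[OF xy] .
    obtain v where v: "E y v" "v \<notin> L0"
      using exists_nbr_outside[OF L0(3) line_subset[OF L0(1)] delsarte_line_card[OF y L0(1,3)]] .
    obtain M where M: "M \<in> L" "y \<in> M" "v \<in> M" using line_through[OF v(1)] .
    have "x \<notin> M" using line_unique[OF L0(1) M(1) L0(2,3) _ M(2) x(2)] v(2) M(3) by blast
    have "real (card {c\<in>M. E c x}) = 1 + \<alpha>"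
      using delsarte_line_regular[OF y M(1,2) x(1) \<open>x \<notin> M\<close> M(2) xy] .
    moreover have "real (card M) = \<beta> + 1" using delsarte_line_card[OF y M(1,2)] .
    ultimately have "{c\<in>M. E c x} \<noteq> M" using beta_gt_alpha by auto
    then obtain z where "z \<in> M" "\<not> E z x" by blast
    then have "\<not> E x z" using adj_sym by blast
    show thesis by (rule that[OF M(1,2) \<open>x \<notin> M\<close> M(2) xy \<open>z \<in> M\<close> \<open>\<not> E x z\<close>])
  next
    case 2
    then obtain w where w: "E w y" "d x w = 1" using gdist_SucE[OF x(1) yV, of 1] by auto
    have xw: "E x w" using gdist_eq_1D[OF x(1) adj_in_V(1)[OF w(1)] w(2)] .
    obtain M where M: "M \<in> L" "w \<in> M" "y \<in> M" using line_through[OF w(1)] .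
    have "\<not> E x y" using gdist_adj 2 by fastforce
    then have "x \<notin> M" using line_adj[OF M(1) _ M(3) x(2)] by blast
    show thesis by (rule that[OF M(1,3) \<open>x \<notin> M\<close> M(2) xw M(3) \<open>\<not> E x y\<close>])
  qed
qed

lemma card_common_nbrs_ge:
  assumes x: "delsarte_vertex V E (bi 0) \<gamma> x"
    and M: "M \<in> L" "x \<notin> M" and z: "z \<in> M" "\<not> E x z"
  shows "real (card {c\<in>M. E c x}) * (1 + \<alpha>) \<le> real (card {v\<in>V. E z v \<and> E x v})"
proof -
  have zV: "z \<in> V" using line_subset[OF M(1)] z(1) by blast
  define W where "W = {c\<in>M. E c x}"
  have "W \<subseteq> V" using line_subset[OF M(1)] unfolding W_def by blast
  then have fin_W: "finite W" using finite_subset finite_V by blast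
  have "\<exists>C. C \<in> L \<and> x \<in> C \<and> w \<in> C" if "w \<in> W" for w
  proof -
    from that have "E w x" unfolding W_def by blast
    then obtain C where "C \<in> L" "x \<in> C" "w \<in> C" by (rule line_through[OF adj_sym])
    then show ?thesis by blast
  qed
  then obtain Lf where Lf: "\<And>w. w \<in> W \<Longrightarrow> Lf w \<in> L \<and> x \<in> Lf w \<and> w \<in> Lf w"
    by metis
  define T where "T w = {c\<in>Lf w. E c z}" for w
  have card_T: "real (card (T w)) = 1 + \<alpha>" if w: "w \<in> W" for w
  proof -
    have Lw: "Lf w \<in> L" "x \<in> Lf w" "w \<in> Lf w" using Lf[OF w] by auto
    have "w \<in> M" "E w x" using w unfolding W_def by auto
    then have "w \<noteq> z" using z(2) adj_sym[OF \<open>E w x\<close>] by blast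
    then have "E z w" using line_adj[OF M(1) z(1) \<open>w \<in> M\<close>] by blast
    moreover have "z \<notin> Lf w" using line_adj[OF Lw(1,2)] z(2) z(1) M(2) by blast
    ultimately show ?thesis
      unfolding T_def using delsarte_line_regular[OF x Lw(1,2) zV _ Lw(3)] by blast
  qed
  have fin_T: "finite (T w)" if "w \<in> W" for w
  proof -
    have "T w \<subseteq> V" using line_subset Lf[OF that] unfolding T_def by blast
    then show ?thesis using finite_subset finite_V by blast
  qed
  have T_common: "(\<Union>w\<in>W. T w) \<subseteq> {v\<in>V. E z v \<and> E x v}"
  proof
    fix c assume "c \<in> (\<Union>w\<in>W. T w)"
    then obtain w where w: "w \<in> W" "c \<in> Lf w" "E c z" unfolding T_def by blast
    then have "E x c" using line_adj[of "Lf w" x c] Lf[OF w(1)] z(2) by blast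
    then show "c \<in> {v\<in>V. E z v \<and> E x v}" using adj_in_V(2) adj_sym[OF w(3)] by blast
  qed
  have T_disjoint: "T w1 \<inter> T w2 = {}" if w: "w1 \<in> W" "w2 \<in> W" "w1 \<noteq> w2" for w1 w2
  proof -
    have L1: "Lf w1 \<in> L" "x \<in> Lf w1" "w1 \<in> Lf w1" and L2: "Lf w2 \<in> L" "x \<in> Lf w2" "w2 \<in> Lf w2"
      using Lf[OF w(1)] Lf[OF w(2)] by auto
    have "Lf w1 \<noteq> Lf w2"
    proof
      assume "Lf w1 = Lf w2"
      moreover have "w1 \<in> M" "w2 \<in> M" using w unfolding W_def by auto
      ultimately have "Lf w1 = M" using line_unique[OF L1(1) M(1) L1(3) _ _ _ w(3)] L2(3) by simp
      then show False using L1(2) M(2) by simp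
    qed
    then have "T w1 \<inter> T w2 \<subseteq> {x}"
      using lines_meet_in_point[OF L1(1) L2(1) _ L1(2) L2(2)] unfolding T_def by blast
    then show ?thesis using z(2) unfolding T_def by blast
  qed
  have "card (\<Union>w\<in>W. T w) = (\<Sum>w\<in>W. card (T w))"
    using fin_W fin_T T_disjoint by (intro card_UN_disjoint) auto
  then have "real (card (\<Union>w\<in>W. T w)) = real (card W) * (1 + \<alpha>)"
    using card_T by simp
  then show ?thesis using card_mono[OF _ T_common] finite_V unfolding W_def by simp
qed

lemma alpha_le_b:
  assumes x: "delsarte_vertex V E (bi 0) \<gamma> x"
    and M: "M \<in> L" "real (card M) = \<beta> + 1" "x \<notin> M"
    and y0: "y0 \<in> M" "E x y0" and z: "z \<in> M" "\<not> E x z"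
  shows "\<alpha> \<le> real_of_int b"
proof -
  have xV: "x \<in> V" using x unfolding delsarte_vertex_def by blast
  have zV: "z \<in> V" using line_subset[OF M(1)] z(1) by blast
  have card_W: "real (card {c\<in>M. E c x}) = 1 + \<alpha>"
    using delsarte_clique_regular[OF line_is_clique[OF M(1)] M(2) xV M(3) y0] .
  have "y0 \<noteq> z" "x \<noteq> z" using y0(2) z M(3) by blast+
  then have "d x z = 2"
    using gdist_eq_2I[OF xV zV _ z(2) y0(2) line_adj[OF M(1) y0(1) z(1)]] by blast
  then have "(1 + \<alpha>) * (1 + \<alpha>) \<le> (1 + real_of_int b) * (1 + \<alpha>)"
    using card_common_nbrs_ge[OF x M(1,3) z] card_W card_common_nbrs[OF xV zV] by simp
  moreover have "1 + \<alpha> > 0"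
  proof -
    have "finite {c\<in>M. E c x}" using finite_subset[OF line_subset[OF M(1)] finite_V] by simp
    moreover have "y0 \<in> {c\<in>M. E c x}" using y0(1) adj_sym[OF y0(2)] by blast
    ultimately have "card {c\<in>M. E c x} > 0" by (auto simp: card_gt_0_iff)
    then show ?thesis using card_W by simp
  qed
  ultimately have "1 + \<alpha> \<le> 1 + real_of_int b" by (rule mult_right_le_imp_le)
  then show ?thesis by simp
qed

end

theorem lemma11:
  fixes V :: "'a set" and E :: "'a \<Rightarrow> 'a \<Rightarrow> bool"
    and D :: nat and bi ci :: "nat \<Rightarrow> nat"
    and b :: int and \<alpha> \<beta> :: real and \<gamma> :: nat and x y :: 'a
  assumes "distance_regular V E D bi ci"
    and "classical_parameters bi ci D b \<alpha> \<beta>"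
    and "b \<ge> 2" and "D \<ge> 3"
    and "\<gamma> \<ge> 3" and "PLS V E \<gamma>"
    and "x \<noteq> y"
    and "delsarte_vertex V E (bi 0) \<gamma> x" and "delsarte_vertex V E (bi 0) \<gamma> y"
    and "gdist E x y \<le> 2"
  shows "\<alpha> \<le> real_of_int b \<and> (\<exists>n::nat. \<alpha> = real n)"
proof -
  interpret classical_pls V E D bi ci b \<alpha> \<beta> \<gamma>
    using assms(1-4,6) by unfold_locales auto
  have "x \<in> V" using assms(8) unfolding delsarte_vertex_def by blast
  then obtain M y0 z where M: "M \<in> L" "y \<in> M" "x \<notin> M" "y0 \<in> M" "E x y0" "z \<in> M" "\<not> E x z"
    by (rule line_avoiding_vertex[OF assms(9) _ assms(7,10)])
  have "\<alpha> \<le> real_of_int b"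
    using alpha_le_b[OF assms(8) M(1) delsarte_line_card[OF assms(9) M(1,2)] M(3-7)] .
  with alpha_nat[OF assms(8)] show ?thesis by blast
qed

end
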